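(* Let $\Omega=\{\omega_1,\dots,\omega_N\}$ be a finite set with probabilities $p_i\in(0,1]$, $\sum_{i=1}^N p_i=1$. Let $C\in\mathbb{R}^{d\times n}$, $A\in\mathbb{R}^{k\times n}$, $b\in\mathbb{R}^k$, and for each $i$ let $Q_i\in\mathbb{R}^{d\times m}$, $T_i\in\mathbb{R}^{\ell\times n}$, $W_i\in\mathbb{R}^{\ell\times m}$, $u^i\in\mathbb{R}^\ell$. Let $S\subseteq\mathbb{R}^{n+Nm}$ be the set of all $z=(x,y^1,\dots,y^N)$ with $x\in\mathbb{R}^n$, $y^i\in\mathbb{R}^m$, $Ax=b$, $T_ix+W_iy^i=u^i$ for $i=1,\dots,N$, and $x\ge 0$, $y^1,\dots,y^N\ge 0$, and let $Pz := Cx+\sum_{i=1}^N p_iQ_iy^i$. Suppose $\bar z=(\bar x,\bar y^1,\dots,\bar y^N)\in S$ is a minimizer of the multi-objective linear program "minimize $Pz$ subject to $z\in S$". Then for every $i\in\{1,\dots,N\}$, $\bar y^i$ is a minimizer of the multi-objective linear program "minimize $C\bar x+Q_iy$ subject to $W_iy=u^i-T_i\bar x$, $y\ge 0$, $y\in\mathbb{R}^m$".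
   Context: Objective values in $\mathbb{R}^d$ are ordered componentwise (ordering cone $\mathbb{R}^d_+$). For a multi-objective linear program "minimize $Mw$ subject to $w\in D$" (with $D$ a polyhedral feasible set and $M$ a matrix), its upper image is $\bigcup_{w\in D}\{Mw\}+\mathbb{R}^d_+$; a point $\bar v$ of the upper image is minimal if there is no $v$ in the upper image with $v\in\{\bar v\}-(\mathbb{R}^d_+\setminus\{0\})$; a feasible $\bar w\in D$ is a minimizer if $M\bar w$ is minimal in the upper image. *)

theory Defs
  imports "HOL-Analysis.Analysis"
begin

definition nonneg_cone :: "(real^'d) set" where
  "nonneg_cone = {c. \<forall>j. 0 \<le> c $ j}"

definition upper_image :: "('w \<Rightarrow> real^'d) \<Rightarrow> 'w set \<Rightarrow> (real^'d) set" where
  "upper_image M D = (\<Union>w\<in>D. {M w + c | c. c \<in> nonneg_cone})"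

definition minimal_point :: "(real^'d) set \<Rightarrow> real^'d \<Rightarrow> bool" where
  "minimal_point U vb \<longleftrightarrow> vb \<in> U \<and>
     \<not> (\<exists>v\<in>U. v \<in> {vb - c | c. c \<in> nonneg_cone - {0}})"

definition mo_minimizer :: "('w \<Rightarrow> real^'d) \<Rightarrow> 'w set \<Rightarrow> 'w \<Rightarrow> bool" where
  "mo_minimizer M D wb \<longleftrightarrow> wb \<in> D \<and> minimal_point (upper_image M D) (M wb)"

end

theory Submission
  imports Defs
begin

text \<open>
  Minimality in the upper image is Pareto minimality: no feasible point has a strictly
  smaller objective vector in the componentwise order. Replacing only the recourse
  decision of scenario \<open>i\<close> keeps the whole decision feasible and moves the expected
  objective by \<open>p i\<close> times the change of the scenario objective, so a point dominating
  \<open>yb i\<close> in scenario \<open>i\<close> would, since \<open>p i > 0\<close>, give a point dominating \<open>(xb, yb)\<close>.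
\<close>

lemma upper_image_eq: "upper_image M D = {v. \<exists>w\<in>D. M w \<le> v}"
proof -
  have "v \<in> {M w + c | c. c \<in> nonneg_cone} \<longleftrightarrow> M w \<le> v" for v w
  proof
    assume "M w \<le> v"
    then have "v = M w + (v - M w)" "v - M w \<in> nonneg_cone"
      by (simp_all add: nonneg_cone_def less_eq_vec_def)
    then show "v \<in> {M w + c | c. c \<in> nonneg_cone}"
      by blast
  qed (auto simp: nonneg_cone_def less_eq_vec_def)
  then show ?thesis
    unfolding upper_image_def by blast
qed

lemma minimal_point_iff: "minimal_point U vb \<longleftrightarrow> vb \<in> U \<and> \<not> (\<exists>v\<in>U. v < vb)"
proof -
  have "v \<in> {vb - c | c. c \<in> nonneg_cone - {0}} \<longleftrightarrow> v < vb" for v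
  proof
    assume "v < vb"
    then have "v = vb - (vb - v)" "vb - v \<in> nonneg_cone - {0}"
      by (auto simp: nonneg_cone_def less_le less_eq_vec_def)
    then show "v \<in> {vb - c | c. c \<in> nonneg_cone - {0}}"
      by blast
  qed (auto simp: nonneg_cone_def less_le less_eq_vec_def)
  then show ?thesis
    unfolding minimal_point_def by blast
qed

lemma mo_minimizer_iff: "mo_minimizer M D wb \<longleftrightarrow> wb \<in> D \<and> \<not> (\<exists>w\<in>D. M w < M wb)"
  unfolding mo_minimizer_def minimal_point_iff upper_image_eq
  by (auto intro: order.strict_trans2)

lemma scaleR_neg_vec:
  fixes d :: "real^'d"
  assumes "0 < a" and "d < 0"
  shows "a *\<^sub>R d < 0"
  using assms by (auto simp: less_le less_eq_vec_def mult_nonneg_nonpos)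

lemma mo_minimizer_pullback:
  assumes "mo_minimizer M D wb" and "vb \<in> D'" and "f ` D' \<subseteq> D" and "0 < a"
    and "\<And>v. v \<in> D' \<Longrightarrow> M (f v) = M wb + a *\<^sub>R (M' v - M' vb)"
  shows "mo_minimizer M' D' vb"
  unfolding mo_minimizer_iff
proof (intro conjI notI)
  assume "\<exists>v\<in>D'. M' v < M' vb"
  then obtain v where v: "v \<in> D'" and "M' v - M' vb < 0"
    by (auto simp: less_le less_eq_vec_def)
  then have "M (f v) < M wb"
    using assms(4,5) scaleR_neg_vec by (fastforce simp: less_le less_eq_vec_def)
  then show False
    using assms(1,3) v unfolding mo_minimizer_iff by blast
qed (fact assms(2))

lemma sum_fun_upd_diff:
  fixes g :: "'i \<Rightarrow> 'a \<Rightarrow> 'b::ab_group_add"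
  assumes "finite S" and "i \<in> S"
  shows "(\<Sum>j\<in>S. g j ((y(i := z)) j)) = (\<Sum>j\<in>S. g j (y j)) + (g i z - g i (y i))"
  using assms by (simp add: sum.remove)

theorem proposition2p5:
  fixes p :: "'N::finite \<Rightarrow> real"
    and C :: "real^'n::finite^'d::finite"
    and A :: "real^'n^'k::finite" and b :: "real^'k"
    and Q :: "'N \<Rightarrow> real^'m::finite^'d"
    and T :: "'N \<Rightarrow> real^'n^'l::finite"
    and W :: "'N \<Rightarrow> real^'m^'l"
    and u :: "'N \<Rightarrow> real^'l"
    and xb :: "real^'n" and yb :: "'N \<Rightarrow> real^'m"
  assumes "\<forall>i. 0 < p i \<and> p i \<le> 1"
    and "(\<Sum>i\<in>UNIV. p i) = 1"
    and "mo_minimizer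
           (\<lambda>(x, y). C *v x + (\<Sum>i\<in>UNIV. p i *\<^sub>R (Q i *v y i)))
           {(x, y). A *v x = b \<and> (\<forall>i. T i *v x + W i *v y i = u i)
                    \<and> (\<forall>j. 0 \<le> x $ j) \<and> (\<forall>i j. 0 \<le> y i $ j)}
           (xb, yb)"
  shows "\<forall>i. mo_minimizer (\<lambda>y. C *v xb + Q i *v y)
                 {y. W i *v y = u i - T i *v xb \<and> (\<forall>j. 0 \<le> y $ j)}
                 (yb i)"
proof
  fix i
  let ?P = "\<lambda>(x, y). C *v x + (\<Sum>i\<in>UNIV. p i *\<^sub>R (Q i *v y i))"
  let ?S = "{(x, y). A *v x = b \<and> (\<forall>i. T i *v x + W i *v y i = u i)
              \<and> (\<forall>j. 0 \<le> x $ j) \<and> (\<forall>i j. 0 \<le> y i $ j)}"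
  let ?Pi = "\<lambda>y. C *v xb + Q i *v y"
  let ?Si = "{y. W i *v y = u i - T i *v xb \<and> (\<forall>j. 0 \<le> y $ j)}"
  have "(xb, yb) \<in> ?S"
    using assms(3) unfolding mo_minimizer_def by blast
  then have feasible: "yb i \<in> ?Si" and embed: "(\<lambda>y. (xb, yb(i := y))) ` ?Si \<subseteq> ?S"
    by (auto simp: algebra_simps)
  have objective: "?P (xb, yb(i := y)) = ?P (xb, yb) + p i *\<^sub>R (?Pi y - ?Pi (yb i))" for y
    using sum_fun_upd_diff[of UNIV i "\<lambda>j w. p j *\<^sub>R (Q j *v w)"] by (simp add: scaleR_diff_right)
  show "mo_minimizer ?Pi ?Si (yb i)"
  proof (rule mo_minimizer_pullback[OF assms(3) feasible embed])
    show "0 < p i"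
      using assms(1) by blast
  qed (rule objective)
qed

end
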